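(* Consider the Lur'e system described in the context, with $x(0)=0$. Suppose there exist vectors $\bar u\in\mathbf{R}^n$, $\bar u\ge0$, and $\bar z\in\mathbf{R}^\ell$, $\bar z>0$, such that $$\gamma_{z,u}\bar u<(I-\gamma_{z,v}\gamma_\psi(\bar z))\bar z\quad\text{(componentwise)}.$$ Then the system is CIBO stable; more precisely, every input $u$ with $\lvert u\rvert_{\mathcal{L}_\infty^n}\le\bar u$ produces $\lvert z\rvert_{\mathcal{L}_\infty^\ell}\le\bar z$ (and bounded output $y$).
   Context: Lur'e system: matrices $A\in\mathbf{R}^{N\times N}$, $B_u\in\mathbf{R}^{N\times n}$, $B_v\in\mathbf{R}^{N\times\ell}$, $C_y\in\mathbf{R}^{m\times N}$, $C_z\in\mathbf{R}^{\ell\times N}$, and $\varphi^*\in\mathbf{R}^\ell$ are given; the dynamics are $\dot x=Ax+B_v v+B_u u$, $y=C_y x$, $z=C_z x$, $v=\psi(z)$ with $\psi_i(z_i)=\sin(\varphi^*_i+z_i)-\sin\varphi^*_i-\cos(\varphi^*_i)z_i$, input $u:[0,\infty)\to\mathbf{R}^n$ measurable. It is assumed that for $i\in\{y,z\}$, $j\in\{u,v\}$ the impulse response $h^{i,j}(t)=C_ie^{At}B_j$ ($t\ge0$) has absolutely integrable entries; the gain matrices $\gamma_{i,j}$ have entries $[\gamma_{i,j}]_{pq}=\int_0^\infty|h^{i,j}_{pq}(\tau)|d\tau$. For $\bar z>0$, $\gamma_\psi(\bar z)$ is the diagonal matrix with $\gamma_{\psi,ii}(\bar z_i)=\sup_{0<|z_i|\le\bar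 z_i}\left|\frac{\sin(\varphi^*_i+z_i)-\sin\varphi^*_i}{z_i}-\cos\varphi^*_i\right|$. The element-wise $\mathcal{L}$-infinity norm $\lvert w\rvert_{\mathcal{L}_\infty^k}$ of $w:[0,\infty)\to\mathbf{R}^k$ has entries $\sup_{t\ge0}|w_i(t)|$. CIBO stability: there exists $\bar u$ such that every input with $\lvert u\rvert_{\mathcal{L}_\infty^n}\le\bar u$ yields finite $\lvert y\rvert_{\mathcal{L}_\infty^m}$. Inequalities are componentwise. *)

theory Defs
  imports "HOL-Analysis.Analysis"
begin

primrec matpow :: "real^'n^'n \<Rightarrow> nat \<Rightarrow> real^'n^'n" where
  "matpow M 0 = mat 1"
| "matpow M (Suc k) = M ** matpow M k"

definition mexp :: "real^'n^'n \<Rightarrow> real^'n^'n" where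
  "mexp M = (\<Sum>k. (1 / fact k) *\<^sub>R matpow M k)"

definition impulse :: "real^'N^'i \<Rightarrow> real^'N^'N \<Rightarrow> real^'j^'N \<Rightarrow> real \<Rightarrow> real^'j^'i" where
  "impulse C A B t = C ** mexp (t *\<^sub>R A) ** B"

definition abs_int_impulse :: "real^'N^'i \<Rightarrow> real^'N^'N \<Rightarrow> real^'j^'N \<Rightarrow> bool" where
  "abs_int_impulse C A B \<longleftrightarrow>
     (\<forall>p q. (\<lambda>t. impulse C A B t $ p $ q) absolutely_integrable_on {0..})"

definition gain :: "real^'N^'i \<Rightarrow> real^'N^'N \<Rightarrow> real^'j^'N \<Rightarrow> real^'j^'i" where
  "gain C A B = (\<chi> p q. integral {0..} (\<lambda>t. \<bar>impulse C A B t $ p $ q\<bar>))"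

definition psi :: "real^'l \<Rightarrow> real^'l \<Rightarrow> real^'l" where
  "psi phi z = (\<chi> i. sin (phi $ i + z $ i) - sin (phi $ i) - cos (phi $ i) * z $ i)"

definition gamma_psi :: "real^'l \<Rightarrow> real^'l \<Rightarrow> real^'l^'l" where
  "gamma_psi phi zb = (\<chi> i j. if i = j then
       Sup {\<bar>(sin (phi $ i + s) - sin (phi $ i)) / s - cos (phi $ i)\<bar> | s. 0 < \<bar>s\<bar> \<and> \<bar>s\<bar> \<le> zb $ i}
     else 0)"

definition vless :: "real^'k \<Rightarrow> real^'k \<Rightarrow> bool" where
  "vless a b \<longleftrightarrow> (\<forall>i. a $ i < b $ i)"

text \<open>Solution of the Lur'e system with x(0)=0 in the Caratheodory (integral) sense:
  x(t) = integral_0^t (A x + B_v psi(C_z x) + B_u u) ds for all t >= 0.\<close>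
definition lure_solution ::
  "real^'N^'N \<Rightarrow> real^'n^'N \<Rightarrow> real^'l^'N \<Rightarrow> real^'N^'l \<Rightarrow> real^'l
   \<Rightarrow> (real \<Rightarrow> real^'n) \<Rightarrow> (real \<Rightarrow> real^'N) \<Rightarrow> bool" where
  "lure_solution A Bu Bv Cz phi u x \<longleftrightarrow>
     (\<forall>t\<ge>0. ((\<lambda>s. A *v x s + Bv *v psi phi (Cz *v x s) + Bu *v u s) has_integral x t) {0..t})"

end

theory Submission
  imports Defs
begin

text \<open>Along a solution with x(0) = 0, variation of constants writes every output as a
  convolution of the impulse responses with the inputs u and v = psi(z); hence, componentwise,
  |y(t)| is at most gamma_yu times the bound on |u| plus gamma_yv times the bound on |v|. As long
  as |z| <= zbar on [0,t], the sector bound |psi(z)| <= gamma_psi(zbar) zbar and the small gain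
  condition therefore give |z(t)| < zbar strictly. By continuity of z the bound zbar can never be
  reached for a first time, so it holds for all times, and the same convolution estimate then
  bounds y.\<close>

section \<open>The matrix exponential\<close>

lemma matpow_scaleR: "matpow (t *\<^sub>R A) k = (t ^ k) *\<^sub>R matpow A k"
  by (induction k) (auto simp: matrix_scalar_ac scalar_matrix_assoc[symmetric])

lemma matpow_mult_commute: "matpow A k ** A = A ** matpow A k"
proof (induction k)
  case (Suc k)
  have "matpow A (Suc k) ** A = A ** (matpow A k ** A)" by (simp add: matrix_mul_assoc)
  then show ?case using Suc by simp
qed simp

definition matrix_abs_sum :: "real^'n^'m \<Rightarrow> real" where
  "matrix_abs_sum M = (\<Sum>i\<in>UNIV. \<Sum>j\<in>UNIV. \<bar>M $ i $ j\<bar>)"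

lemma norm_le_matrix_abs_sum: "norm M \<le> matrix_abs_sum M"
proof -
  have "norm M \<le> (\<Sum>i\<in>UNIV. norm (M $ i))" by (simp add: norm_vec_def L2_set_le_sum)
  also have "\<dots> \<le> matrix_abs_sum M"
    unfolding matrix_abs_sum_def by (intro sum_mono norm_le_l1_cart)
  finally show ?thesis .
qed

lemma abs_matpow_nth_le: "\<bar>matpow A k $ i $ j\<bar> \<le> matrix_abs_sum A ^ k"
proof (induction k arbitrary: i j)
  case 0
  then show ?case by (simp add: mat_def)
next
  case (Suc k)
  have "\<bar>matpow A (Suc k) $ i $ j\<bar> = \<bar>\<Sum>l\<in>UNIV. A $ i $ l * matpow A k $ l $ j\<bar>"
    by (simp add: matrix_matrix_mult_def)
  also have "\<dots> \<le> (\<Sum>l\<in>UNIV. \<bar>A $ i $ l\<bar> * \<bar>matpow A k $ l $ j\<bar>)"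
    by (metis (no_types, lifting) abs_mult sum.cong sum_abs)
  also have "\<dots> \<le> (\<Sum>l\<in>UNIV. \<bar>A $ i $ l\<bar>) * matrix_abs_sum A ^ k"
    unfolding sum_distrib_right by (intro sum_mono mult_left_mono Suc.IH) auto
  also have "\<dots> \<le> matrix_abs_sum A * matrix_abs_sum A ^ k"
    unfolding matrix_abs_sum_def
    by (intro mult_right_mono member_le_sum zero_le_power sum_nonneg) auto
  finally show ?case by simp
qed

lemma summable_mexp_series: "summable (\<lambda>k. (1 / fact k) *\<^sub>R matpow (A::real^'n^'n) k)"
proof (rule summable_comparison_test)
  have "matrix_abs_sum (matpow A k) \<le> real (CARD('n) * CARD('n)) * matrix_abs_sum A ^ k" for k
  proof -
    have "matrix_abs_sum (matpow A k) \<le> (\<Sum>i\<in>(UNIV::'n set). \<Sum>j\<in>(UNIV::'n set). matrix_abs_sum A ^ k)"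
      unfolding matrix_abs_sum_def[of "matpow A k"] by (intro sum_mono abs_matpow_nth_le)
    then show ?thesis by simp
  qed
  then have "norm (matpow A k) \<le> real (CARD('n) * CARD('n)) * matrix_abs_sum A ^ k" for k
    using norm_le_matrix_abs_sum order_trans by blast
  then show "\<exists>N. \<forall>k\<ge>N. norm ((1 / fact k) *\<^sub>R matpow A k)
      \<le> real (CARD('n) * CARD('n)) * (matrix_abs_sum A ^ k / fact k)"
    by (auto simp: divide_simps mult.commute)
  show "summable (\<lambda>k. real (CARD('n) * CARD('n)) * (matrix_abs_sum A ^ k / fact k))"
    using summable_exp[of "matrix_abs_sum A"] by (intro summable_mult) (simp add: divide_inverse mult.commute)
qed

lemma mexp_scaleR_nth:
  fixes A :: "real^'n^'n"
  shows "mexp (t *\<^sub>R A) $ i $ j = (\<Sum>k. (matpow A k $ i $ j / fact k) * t ^ k)"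
proof -
  have "bounded_linear (\<lambda>M::real^'n^'n. M $ i $ j)"
    using bounded_linear_compose[OF bounded_linear_vec_nth bounded_linear_vec_nth] .
  from bounded_linear.sums[OF this summable_sums[OF summable_mexp_series]]
  have "(\<lambda>k. (1 / fact k) * matpow (t *\<^sub>R A) k $ i $ j) sums mexp (t *\<^sub>R A) $ i $ j"
    by (simp add: mexp_def)
  then show ?thesis by (simp add: sums_unique matpow_scaleR mult_ac)
qed

lemma summable_mexp_nth_series: "summable (\<lambda>k. (matpow A k $ i $ j / fact k) * y ^ k)"
proof (rule summable_comparison_test)
  have "norm ((matpow A k $ i $ j / fact k) * y ^ k) \<le> (matrix_abs_sum A * \<bar>y\<bar>) ^ k / fact k" for k
    using abs_matpow_nth_le[of A k i j]
    by (simp add: abs_mult power_abs power_mult_distrib divide_right_mono mult_right_mono)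
  then show "\<exists>N. \<forall>k\<ge>N. norm ((matpow A k $ i $ j / fact k) * y ^ k) \<le> (matrix_abs_sum A * \<bar>y\<bar>) ^ k / fact k"
    by blast
  show "summable (\<lambda>k. (matrix_abs_sum A * \<bar>y\<bar>) ^ k / fact k)"
    using summable_exp[of "matrix_abs_sum A * \<bar>y\<bar>"] by (simp add: divide_inverse mult.commute)
qed

lemma mexp_zero: "mexp (0::real^'n^'n) = mat 1"
proof -
  have "mexp (0 *\<^sub>R (0::real^'n^'n)) $ i $ j = mat 1 $ i $ j" for i j
    unfolding mexp_scaleR_nth powser_zero by simp
  then show ?thesis by (simp add: vec_eq_iff)
qed

lemma has_real_derivative_mexp_nth:
  "((\<lambda>t. mexp (t *\<^sub>R A) $ i $ j) has_real_derivative (mexp (t *\<^sub>R A) ** A) $ i $ j) (at t)"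
proof -
  let ?c = "\<lambda>i j k. matpow A k $ i $ j / fact k"
  have "(mexp (t *\<^sub>R A) ** A) $ i $ j = (\<Sum>l\<in>UNIV. (\<Sum>k. ?c i l k * t ^ k) * A $ l $ j)"
    by (simp add: matrix_matrix_mult_def mexp_scaleR_nth)
  also have "\<dots> = (\<Sum>l\<in>UNIV. \<Sum>k. ?c i l k * t ^ k * A $ l $ j)"
    by (intro sum.cong refl suminf_mult2 summable_mexp_nth_series)
  also have "\<dots> = (\<Sum>k. \<Sum>l\<in>UNIV. ?c i l k * t ^ k * A $ l $ j)"
    by (rule suminf_sum[symmetric]) (intro summable_mult2 summable_mexp_nth_series)
  also have "\<dots> = (\<Sum>k. diffs (?c i j) k * t ^ k)"
  proof (rule suminf_cong)
    fix k
    have "(\<Sum>l\<in>UNIV. ?c i l k * t ^ k * A $ l $ j) = (t ^ k / fact k) * (matpow A k ** A) $ i $ j"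
      by (simp add: matrix_matrix_mult_def sum_distrib_left mult_ac)
    also have "\<dots> = diffs (?c i j) k * t ^ k"
      by (simp add: matpow_mult_commute diffs_def fact_Suc del: of_nat_Suc)
    finally show "(\<Sum>l\<in>UNIV. ?c i l k * t ^ k * A $ l $ j) = diffs (?c i j) k * t ^ k" .
  qed
  finally show ?thesis
    unfolding mexp_scaleR_nth
    by (simp only:) (intro termdiffs_strong_converges_everywhere summable_mexp_nth_series)
qed

lemma continuous_on_mexp_nth [continuous_intros]:
  "continuous_on S f \<Longrightarrow> continuous_on S (\<lambda>s. mexp (f s *\<^sub>R A) $ i $ j)"
  using continuous_on_compose2[of UNIV "\<lambda>t. mexp (t *\<^sub>R A) $ i $ j"]
  by (metis DERIV_isCont has_real_derivative_mexp_nth continuous_at_imp_continuous_on subset_UNIV)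

lemma continuous_on_impulse_nth [continuous_intros]:
  "continuous_on S f \<Longrightarrow> continuous_on S (\<lambda>s. impulse C A B (f s) $ i $ j)"
  unfolding impulse_def matrix_matrix_mult_def by simp (intro continuous_intros)


section \<open>Integration by parts and convolution estimates\<close>

lemma absolutely_integrable_on_Icc_iff_integrable:
  "(f::real \<Rightarrow> real) absolutely_integrable_on {a..b} \<longleftrightarrow> integrable (lebesgue_on {a..b}) f"
  by (simp add: integrable_restrict_space set_integrable_def)

lemma integral_lebesgue_on_Icc:
  "(f::real \<Rightarrow> real) absolutely_integrable_on {a..b}
    \<Longrightarrow> integral\<^sup>L (lebesgue_on {a..b}) f = integral {a..b} f"
  by (metis absolutely_integrable_on_Icc_iff_integrable lebesgue_integral_eq_integral
      lmeasurable_interval(1) fmeasurableD)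

lemma absolutely_integrable_continuous_mult:
  fixes k \<phi> :: "real \<Rightarrow> real"
  assumes k: "continuous_on {a..b} k" and \<phi>: "\<phi> absolutely_integrable_on {a..b}"
  shows "(\<lambda>s. k s * \<phi> s) absolutely_integrable_on {a..b}"
proof (rule absolutely_integrable_bounded_measurable_product_real[OF _ _ _ \<phi>])
  show "k \<in> borel_measurable (lebesgue_on {a..b})"
    by (intro continuous_imp_measurable_on_sets_lebesgue k) auto
  show "bounded (k ` {a..b})"
    by (intro compact_imp_bounded compact_continuous_image k) auto
qed auto

lemma integrable_continuous_mult:
  fixes k \<phi> :: "real \<Rightarrow> real"
  assumes "continuous_on {a..b} k" "\<phi> absolutely_integrable_on {a..b}"
  shows "(\<lambda>s. k s * \<phi> s) integrable_on {a..b}"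
  using absolutely_integrable_continuous_mult[OF assms] set_lebesgue_integral_eq_integral by blast

lemma absolutely_integrable_matrix_vector_nth:
  fixes M :: "real^'q^'p" and g :: "real \<Rightarrow> real^'q"
  assumes "\<And>q. (\<lambda>s. g s $ q) absolutely_integrable_on S"
  shows "(\<lambda>s. (M *v g s) $ p) absolutely_integrable_on S"
proof -
  have "(\<lambda>s. \<Sum>q\<in>UNIV. M $ p $ q * g s $ q) absolutely_integrable_on S"
    by (intro absolutely_integrable_sum set_integrable_mult_right assms) auto
  then show ?thesis by (simp add: matrix_vector_mult_def)
qed

lemma lebesgue_on_Icc_integral_truncate:
  fixes \<phi> :: "real \<Rightarrow> real"
  assumes \<phi>: "integrable (lebesgue_on {a..b}) \<phi>" and c: "c \<in> {a..b}"
  shows "(LINT s|lebesgue_on {a..b}. (if s \<le> c then \<phi> s else 0)) = integral {a..c} \<phi>"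
    and "(LINT s|lebesgue_on {a..b}. (if c \<le> s then \<phi> s else 0)) = integral {c..b} \<phi>"
proof -
  have [measurable]: "\<phi> \<in> borel_measurable (lebesgue_on {a..b})" using \<phi> by blast
  have [measurable]: "(\<lambda>x::real. x) \<in> borel_measurable (lebesgue_on {a..b})"
    by (intro continuous_imp_measurable_on_sets_lebesgue continuous_on_id) simp
  have "integrable (lebesgue_on {a..b}) (\<lambda>s. if s \<le> c then \<phi> s else 0)"
    by (rule Bochner_Integration.integrable_bound[OF \<phi>]) auto
  moreover have "integrable (lebesgue_on {a..b}) (\<lambda>s. if c \<le> s then \<phi> s else 0)"
    by (rule Bochner_Integration.integrable_bound[OF \<phi>]) auto
  ultimately have "(LINT s|lebesgue_on {a..b}. (if s \<le> c then \<phi> s else 0))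
      = integral {a..b} (\<lambda>s. if s \<in> {..c} then \<phi> s else 0)"
    "(LINT s|lebesgue_on {a..b}. (if c \<le> s then \<phi> s else 0))
      = integral {a..b} (\<lambda>s. if s \<in> {c..} then \<phi> s else 0)"
    by (simp_all add: lebesgue_integral_eq_integral)
  then show "(LINT s|lebesgue_on {a..b}. (if s \<le> c then \<phi> s else 0)) = integral {a..c} \<phi>"
    "(LINT s|lebesgue_on {a..b}. (if c \<le> s then \<phi> s else 0)) = integral {c..b} \<phi>"
    using integral_restrict_Int[of "{a..b}" "{..c}" \<phi>] integral_restrict_Int[of "{a..b}" "{c..}" \<phi>] c
    by (simp_all add: Int_commute Int_atLeastAtMost)
qed

lemma integrable_lebesgue_on_triangle:
  fixes g \<phi> :: "real \<Rightarrow> real"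
  assumes g: "continuous_on {a..b} g" and \<phi>: "integrable (lebesgue_on {a..b}) \<phi>"
  shows "integrable (lebesgue_on {a..b} \<Otimes>\<^sub>M lebesgue_on {a..b})
           (\<lambda>(r, s). if s \<le> r then g r * \<phi> s else 0)"
proof -
  let ?M = "lebesgue_on {a..b}"
  interpret M: finite_measure ?M by (rule finite_measure_lebesgue_on) simp
  interpret P: pair_sigma_finite ?M ?M ..
  have [measurable]: "\<phi> \<in> borel_measurable ?M" using \<phi> by blast
  have [measurable]: "g \<in> borel_measurable ?M" "(\<lambda>x::real. x) \<in> borel_measurable ?M"
    by (intro continuous_imp_measurable_on_sets_lebesgue g continuous_on_id; simp)+
  obtain B0 where "\<forall>x\<in>g ` {a..b}. \<bar>x\<bar> \<le> B0"
    using compact_imp_bounded[OF compact_continuous_image[OF g compact_Icc]] bounded_real by meson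
  then obtain B where B: "\<And>s. s \<in> {a..b} \<Longrightarrow> \<bar>g s\<bar> \<le> B" "0 \<le> B"
    by (metis abs_ge_zero atLeastAtMost_iff image_eqI max.coboundedI1 max.coboundedI2 order_trans)
  have dominant: "integrable (?M \<Otimes>\<^sub>M ?M) (\<lambda>p. B * \<bar>\<phi> (snd p)\<bar>)"
    by (rule P.Fubini_integrable) (use \<phi> in \<open>auto simp: M.integrable_const\<close>)
  have measurable: "(\<lambda>(r, s). if s \<le> r then g r * \<phi> s else 0) \<in> borel_measurable (?M \<Otimes>\<^sub>M ?M)"
    by measurable
  show ?thesis
  proof (rule Bochner_Integration.integrable_bound[OF dominant measurable], rule AE_I2)
    fix p assume "p \<in> space (?M \<Otimes>\<^sub>M ?M)"
    then have "fst p \<in> {a..b}" by (auto simp: space_pair_measure)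
    then show "norm ((\<lambda>(r, s). if s \<le> r then g r * \<phi> s else 0) p) \<le> norm (B * \<bar>\<phi> (snd p)\<bar>)"
      using B by (auto simp: split_beta abs_mult intro: mult_right_mono)
  qed
qed

text \<open>Fubini on the triangle \<open>a \<le> s \<le> r \<le> b\<close>.\<close>

lemma integral_mult_indefinite_integral_swap:
  fixes g \<phi> :: "real \<Rightarrow> real"
  assumes g: "continuous_on {a..b} g" and \<phi>: "\<phi> absolutely_integrable_on {a..b}"
  shows "integral {a..b} (\<lambda>r. g r * integral {a..r} \<phi>)
       = integral {a..b} (\<lambda>s. integral {s..b} g * \<phi> s)"
proof -
  let ?M = "lebesgue_on {a..b}"
  define f where "f r s = (if s \<le> r then g r * \<phi> s else 0)" for r s
  interpret M: finite_measure ?M by (rule finite_measure_lebesgue_on) simp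
  interpret P: pair_sigma_finite ?M ?M ..
  have \<phi>int: "integrable ?M \<phi>"
    using \<phi> absolutely_integrable_on_Icc_iff_integrable by blast
  have gint: "integrable ?M g"
    using absolutely_integrable_continuous_real[OF g] absolutely_integrable_on_Icc_iff_integrable by blast
  have "continuous_on {a..b} (\<lambda>r. integral {a..r} \<phi>)"
    by (rule indefinite_integral_continuous_1[OF set_lebesgue_integral_eq_integral(1)[OF \<phi>]])
  with g have "continuous_on {a..b} (\<lambda>r. g r * integral {a..r} \<phi>)"
    by (rule continuous_on_mult)
  then have left_integrable: "(\<lambda>r. g r * integral {a..r} \<phi>) absolutely_integrable_on {a..b}"
    by (rule absolutely_integrable_continuous_real)
  have right_integrable: "(\<lambda>s. integral {s..b} g * \<phi> s) absolutely_integrable_on {a..b}"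
    by (rule absolutely_integrable_continuous_mult[OF
          indefinite_integral_continuous_1'[OF integrable_continuous_real[OF g]] \<phi>])
  have inner_s: "(LINT s|?M. f r s) = g r * integral {a..r} \<phi>" if "r \<in> {a..b}" for r
  proof -
    have "(LINT s|?M. f r s) = (LINT s|?M. g r * (if s \<le> r then \<phi> s else 0))"
      unfolding f_def by (rule Bochner_Integration.integral_cong) auto
    also have "\<dots> = g r * integral {a..r} \<phi>"
      by (simp only: integral_mult_right_zero lebesgue_on_Icc_integral_truncate(1)[OF \<phi>int that])
    finally show ?thesis .
  qed
  have inner_r: "(LINT r|?M. f r s) = integral {s..b} g * \<phi> s" if "s \<in> {a..b}" for s
  proof -
    have "(LINT r|?M. f r s) = (LINT r|?M. (if s \<le> r then g r else 0) * \<phi> s)"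
      unfolding f_def by (rule Bochner_Integration.integral_cong) auto
    also have "\<dots> = integral {s..b} g * \<phi> s"
      by (simp only: integral_mult_left_zero lebesgue_on_Icc_integral_truncate(2)[OF gint that])
    finally show ?thesis .
  qed
  have "integral {a..b} (\<lambda>r. g r * integral {a..r} \<phi>) = (LINT r|?M. g r * integral {a..r} \<phi>)"
    by (rule integral_lebesgue_on_Icc[OF left_integrable, symmetric])
  also have "\<dots> = (LINT r|?M. (LINT s|?M. f r s))"
    by (rule Bochner_Integration.integral_cong[OF refl], rule inner_s[symmetric]) simp
  also have "\<dots> = (LINT s|?M. (LINT r|?M. f r s))"
    using integrable_lebesgue_on_triangle[OF g \<phi>int] unfolding f_def
    by (rule P.Fubini_integral[symmetric])
  also have "\<dots> = (LINT s|?M. integral {s..b} g * \<phi> s)"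
    by (rule Bochner_Integration.integral_cong[OF refl], rule inner_r) simp
  also have "\<dots> = integral {a..b} (\<lambda>s. integral {s..b} g * \<phi> s)"
    by (rule integral_lebesgue_on_Icc[OF right_integrable])
  finally show ?thesis .
qed

lemma integration_by_parts_indefinite_integral:
  fixes G g \<phi> :: "real \<Rightarrow> real"
  assumes ab: "a \<le> b"
    and G: "\<And>r. r \<in> {a..b} \<Longrightarrow> (G has_real_derivative g r) (at r within {a..b})"
    and g: "continuous_on {a..b} g"
    and \<phi>: "\<phi> absolutely_integrable_on {a..b}"
  shows "integral {a..b} (\<lambda>s. G s * \<phi> s)
       = G b * integral {a..b} \<phi> - integral {a..b} (\<lambda>r. g r * integral {a..r} \<phi>)"
proof -
  have ftc: "integral {s..b} g = G b - G s" if s: "s \<in> {a..b}" for s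
  proof (rule integral_unique, rule fundamental_theorem_of_calculus)
    show "(G has_vector_derivative g r) (at r within {s..b})" if r: "r \<in> {s..b}" for r
    proof -
      have "(G has_real_derivative g r) (at r within {s..b})"
        by (rule DERIV_subset[OF G]) (use r s in auto)
      then show ?thesis by (simp add: has_real_derivative_iff_has_vector_derivative)
    qed
  qed (use s in auto)
  have Gc: "continuous_on {a..b} G"
    using G by (meson DERIV_continuous continuous_on_eq_continuous_within)
  have "integral {a..b} (\<lambda>r. g r * integral {a..r} \<phi>) = integral {a..b} (\<lambda>s. integral {s..b} g * \<phi> s)"
    by (rule integral_mult_indefinite_integral_swap[OF g \<phi>])
  also have "\<dots> = integral {a..b} (\<lambda>s. (G b - G s) * \<phi> s)"
    by (rule integral_cong) (simp add: ftc)
  also have "\<dots> = integral {a..b} (\<lambda>s. G b * \<phi> s - G s * \<phi> s)"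
    by (simp add: algebra_simps)
  also have "\<dots> = integral {a..b} (\<lambda>s. G b * \<phi> s) - integral {a..b} (\<lambda>s. G s * \<phi> s)"
    by (intro integral_diff integrable_continuous_mult[OF _ \<phi>] Gc continuous_on_const)
  finally show ?thesis by simp
qed

lemma integral_reflect_Icc: "integral {0..t} (\<lambda>s. k (t - s)) = integral {0..t} (k::real \<Rightarrow> real)"
proof -
  have "integral {0..t} (\<lambda>s. k (t - s)) = integral {-t..-0} (\<lambda>x. k (t - - x))"
    using Henstock_Kurzweil_Integration.integral_reflect_real[of t 0 "\<lambda>s. k (t - s)"] by simp
  also have "\<dots> = integral {-t..0} (k \<circ> (+) t)" by (simp add: o_def)
  also have "\<dots> = integral {-t+t..0+t} k" by (rule integral_shift_Icc_real)
  finally show ?thesis by simp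
qed

lemma abs_integral_convolution_le:
  fixes h d :: "real \<Rightarrow> real"
  assumes t: "0 \<le> t" and h: "continuous_on UNIV h" "h absolutely_integrable_on {0..}"
    and d: "d absolutely_integrable_on {0..t}" "\<And>s. s \<in> {0..t} \<Longrightarrow> \<bar>d s\<bar> \<le> b"
  shows "\<bar>integral {0..t} (\<lambda>s. h (t - s) * d s)\<bar> \<le> b * integral {0..} (\<lambda>\<tau>. \<bar>h \<tau>\<bar>)"
proof -
  have b: "0 \<le> b" using d(2)[of 0] t by auto
  have hc: "continuous_on {0..t} (\<lambda>s. h (t - s))"
    by (intro continuous_on_compose2[OF h(1)] continuous_intros) auto
  have "\<bar>integral {0..t} (\<lambda>s. h (t - s) * d s)\<bar> \<le> integral {0..t} (\<lambda>s. \<bar>h (t - s)\<bar> * b)"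
  proof -
    have "(\<lambda>s. \<bar>h (t - s)\<bar> * b) integrable_on {0..t}"
      by (intro integrable_continuous_real continuous_intros hc)
    moreover have "norm (h (t - s) * d s) \<le> \<bar>h (t - s)\<bar> * b" if "s \<in> {0..t}" for s
      using d(2)[OF that] by (simp add: abs_mult mult_left_mono)
    ultimately have "norm (integral {0..t} (\<lambda>s. h (t - s) * d s)) \<le> integral {0..t} (\<lambda>s. \<bar>h (t - s)\<bar> * b)"
      by (rule integral_norm_bound_integral[OF integrable_continuous_mult[OF hc d(1)]])
    then show ?thesis by (simp only: real_norm_def)
  qed
  also have "\<dots> = b * integral {0..t} (\<lambda>\<tau>. \<bar>h \<tau>\<bar>)"
    using integral_reflect_Icc[of t "\<lambda>\<tau>. \<bar>h \<tau>\<bar>"] by (simp add: mult.commute)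
  also have "\<dots> \<le> b * integral {0..} (\<lambda>\<tau>. \<bar>h \<tau>\<bar>)"
  proof (intro mult_left_mono b integral_subset_le)
    show "(\<lambda>\<tau>. \<bar>h \<tau>\<bar>) integrable_on {0..t}"
    proof -
      have "h absolutely_integrable_on {0..t}"
        by (rule absolutely_integrable_on_subinterval[OF h(2)]) auto
      then show ?thesis using absolutely_integrable_on_def[where f = h] by auto
    qed
    show "(\<lambda>\<tau>. \<bar>h \<tau>\<bar>) integrable_on {0..}"
      using h(2) absolutely_integrable_on_def[where f = h and S = "{0..}"] by auto
  qed auto
  finally show ?thesis .
qed

section \<open>The sector bound of the nonlinearity\<close>

lemma abs_sin_diff_le: "\<bar>sin a - sin b\<bar> \<le> \<bar>a - b\<bar>" for a b :: real
proof -
  have "\<bar>sin a - sin b\<bar> = 2 * \<bar>sin ((a - b) / 2)\<bar> * \<bar>cos ((a + b) / 2)\<bar>"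
    by (simp add: sin_diff_sin abs_mult)
  also have "\<dots> \<le> 2 * \<bar>(a - b) / 2\<bar> * 1"
    by (intro mult_mono abs_sin_x_le_abs_x abs_cos_le_one) auto
  finally show ?thesis by simp
qed

lemma bdd_above_sin_difference_quotients:
  fixes a r :: real
  shows "bdd_above {\<bar>(sin (a + s) - sin a) / s - cos a\<bar> | s. 0 < \<bar>s\<bar> \<and> \<bar>s\<bar> \<le> r}"
proof (rule bdd_aboveI)
  fix y assume "y \<in> {\<bar>(sin (a + s) - sin a) / s - cos a\<bar> | s. 0 < \<bar>s\<bar> \<and> \<bar>s\<bar> \<le> r}"
  then obtain s where s: "0 < \<bar>s\<bar>" and y: "y = \<bar>(sin (a + s) - sin a) / s - cos a\<bar>"
    by blast
  have "\<bar>(sin (a + s) - sin a) / s\<bar> \<le> 1"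
    using abs_sin_diff_le[of "a + s" a] s by (simp add: abs_divide divide_le_eq_1)
  then show "y \<le> 2" unfolding y using abs_cos_le_one[of a] by linarith
qed

lemma gamma_psi_nth_nth:
  "gamma_psi phi zb $ q $ q
    = Sup {\<bar>(sin (phi $ q + s) - sin (phi $ q)) / s - cos (phi $ q)\<bar> | s. 0 < \<bar>s\<bar> \<and> \<bar>s\<bar> \<le> zb $ q}"
  by (simp add: gamma_psi_def)

lemma gamma_psi_nth_nonneg:
  assumes "0 < zb $ q"
  shows "0 \<le> gamma_psi phi zb $ q $ q"
proof -
  have "\<bar>(sin (phi $ q + zb $ q) - sin (phi $ q)) / zb $ q - cos (phi $ q)\<bar> \<le> gamma_psi phi zb $ q $ q"
    unfolding gamma_psi_nth_nth
    by (rule cSup_upper[OF _ bdd_above_sin_difference_quotients]) (use assms in auto)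
  then show ?thesis by (meson abs_ge_zero order_trans)
qed

lemma abs_psi_nth_le:
  assumes "\<bar>z $ q\<bar> \<le> zb $ q"
  shows "\<bar>psi phi z $ q\<bar> \<le> gamma_psi phi zb $ q $ q * \<bar>z $ q\<bar>"
proof (cases "z $ q = 0")
  case True
  then show ?thesis by (simp add: psi_def)
next
  case False
  let ?d = "(sin (phi $ q + z $ q) - sin (phi $ q)) / z $ q - cos (phi $ q)"
  have "\<bar>psi phi z $ q\<bar> = \<bar>?d\<bar> * \<bar>z $ q\<bar>"
    using False by (simp add: psi_def abs_mult[symmetric] field_simps)
  also have "\<dots> \<le> gamma_psi phi zb $ q $ q * \<bar>z $ q\<bar>"
    unfolding gamma_psi_nth_nth
    by (intro mult_right_mono cSup_upper[OF _ bdd_above_sin_difference_quotients])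
      (use assms False in auto)
  finally show ?thesis .
qed

lemma gamma_psi_mult_vec_nth: "(gamma_psi phi zb *v v) $ q = gamma_psi phi zb $ q $ q * v $ q"
proof -
  have "(gamma_psi phi zb *v v) $ q = (\<Sum>j\<in>UNIV. gamma_psi phi zb $ q $ j * v $ j)"
    by (simp add: matrix_vector_mult_def)
  also have "\<dots> = (\<Sum>j\<in>UNIV. if q = j then gamma_psi phi zb $ q $ q * v $ j else 0)"
    by (intro sum.cong refl) (auto simp: gamma_psi_def)
  finally show ?thesis by simp
qed

lemma abs_psi_nth_le_gamma_psi_bound:
  assumes "0 < zb $ q" "\<bar>z $ q\<bar> \<le> zb $ q"
  shows "\<bar>psi phi z $ q\<bar> \<le> (gamma_psi phi zb *v zb) $ q"
proof -
  have "\<bar>psi phi z $ q\<bar> \<le> gamma_psi phi zb $ q $ q * \<bar>z $ q\<bar>"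
    by (rule abs_psi_nth_le[OF assms(2)])
  also have "\<dots> \<le> gamma_psi phi zb $ q $ q * zb $ q"
    by (rule mult_left_mono[OF assms(2) gamma_psi_nth_nonneg[OF assms(1)]])
  finally show ?thesis by (simp add: gamma_psi_mult_vec_nth)
qed

section \<open>Variation of constants\<close>

lemma continuous_on_integral_solution:
  fixes f x :: "real \<Rightarrow> real^'N"
  assumes "\<And>r. r \<in> {0..t} \<Longrightarrow> (f has_integral x r) {0..r}"
  shows "continuous_on {0..t} x"
proof (cases "0 \<le> t")
  case True
  then have "continuous_on {0..t} (\<lambda>r. integral {0..r} f)"
    using assms by (intro indefinite_integral_continuous_1) auto
  then show ?thesis
    by (rule continuous_on_eq) (use assms integral_unique in auto)
qed simp

lemma integral_mexp_nth_mult: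
  fixes A :: "real^'N^'N" and \<phi> :: "real \<Rightarrow> real"
  assumes t: "0 \<le> t" and \<phi>: "\<phi> absolutely_integrable_on {0..t}"
    and \<Phi>: "\<And>r. r \<in> {0..t} \<Longrightarrow> integral {0..r} \<phi> = \<Phi> r"
  shows "integral {0..t} (\<lambda>s. mexp ((t - s) *\<^sub>R A) $ i $ j * \<phi> s)
       = mat 1 $ i $ j * \<Phi> t + integral {0..t} (\<lambda>r. (mexp ((t - r) *\<^sub>R A) ** A) $ i $ j * \<Phi> r)"
proof -
  let ?D = "\<lambda>r. (mexp ((t - r) *\<^sub>R A) ** A) $ i $ j"
  have "((\<lambda>s. mexp ((t - s) *\<^sub>R A) $ i $ j) has_real_derivative - ?D r) (at r within {0..t})" for r
  proof -
    have "((\<lambda>s. mexp ((t - s) *\<^sub>R A) $ i $ j) has_real_derivative ?D r * (-1)) (at r)"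
      by (rule DERIV_chain2[OF has_real_derivative_mexp_nth]) (auto intro!: derivative_eq_intros)
    then show ?thesis by (simp add: has_field_derivative_at_within)
  qed
  moreover have "continuous_on {0..t} (\<lambda>r. - ?D r)"
    unfolding matrix_matrix_mult_def by simp (intro continuous_intros)
  ultimately have "integral {0..t} (\<lambda>s. mexp ((t - s) *\<^sub>R A) $ i $ j * \<phi> s)
      = mexp ((t - t) *\<^sub>R A) $ i $ j * integral {0..t} \<phi>
        - integral {0..t} (\<lambda>r. - ?D r * integral {0..r} \<phi>)"
    by (rule integration_by_parts_indefinite_integral[OF t _ _ \<phi>])
  also have "integral {0..t} (\<lambda>r. - ?D r * integral {0..r} \<phi>) = integral {0..t} (\<lambda>r. - ?D r * \<Phi> r)"
    by (rule integral_cong) (simp add: \<Phi>)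
  finally show ?thesis using \<Phi>[of t] t by (simp add: mexp_zero)
qed

lemma sum_integral_mexp_nth_mult_matrix_vector:
  fixes A :: "real^'N^'N" and x :: "real \<Rightarrow> real^'N"
  assumes x: "\<And>j. continuous_on {0..t} (\<lambda>s. x s $ j)"
  shows "(\<Sum>j\<in>UNIV. integral {0..t} (\<lambda>s. mexp ((t - s) *\<^sub>R A) $ i $ j * (A *v x s) $ j))
       = (\<Sum>j\<in>UNIV. integral {0..t} (\<lambda>s. (mexp ((t - s) *\<^sub>R A) ** A) $ i $ j * x s $ j))"
proof -
  have "continuous_on {0..t} (\<lambda>s. mexp ((t - s) *\<^sub>R A) $ i $ j)" for j
    by (intro continuous_on_mexp_nth continuous_intros)
  moreover have "continuous_on {0..t} (\<lambda>s. (A *v x s) $ j)" for j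
    unfolding matrix_vector_mult_def by simp (intro continuous_intros x)
  ultimately have left: "(\<lambda>s. mexp ((t - s) *\<^sub>R A) $ i $ j * (A *v x s) $ j) integrable_on {0..t}" for j
    by (intro integrable_continuous_real continuous_on_mult)
  have Dc: "continuous_on {0..t} (\<lambda>s. (mexp ((t - s) *\<^sub>R A) ** A) $ i $ j)" for j
    unfolding matrix_matrix_mult_def by simp (intro continuous_intros)
  have right: "(\<lambda>s. (mexp ((t - s) *\<^sub>R A) ** A) $ i $ j * x s $ j) integrable_on {0..t}" for j
    by (intro integrable_continuous_real continuous_on_mult Dc x)
  have "(\<Sum>j\<in>UNIV. mexp ((t - s) *\<^sub>R A) $ i $ j * (A *v x s) $ j)
      = (\<Sum>j\<in>UNIV. (mexp ((t - s) *\<^sub>R A) ** A) $ i $ j * x s $ j)" for s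
    using matrix_vector_mul_assoc[of "mexp ((t - s) *\<^sub>R A)" A "x s"]
    by (simp add: matrix_vector_mult_def vec_eq_iff)
  then show ?thesis
    by (simp add: integral_sum[symmetric, OF _ left] integral_sum[symmetric, OF _ right])
qed

lemma variation_of_constants:
  fixes A :: "real^'N^'N" and x w :: "real \<Rightarrow> real^'N"
  assumes t: "0 \<le> t"
    and x: "\<And>r. r \<in> {0..t} \<Longrightarrow> ((\<lambda>s. A *v x s + w s) has_integral x r) {0..r}"
    and w: "\<And>j. (\<lambda>s. w s $ j) absolutely_integrable_on {0..t}"
  shows "x t $ i = (\<Sum>j\<in>UNIV. integral {0..t} (\<lambda>s. mexp ((t - s) *\<^sub>R A) $ i $ j * w s $ j))"
proof -
  let ?E = "\<lambda>s j. mexp ((t - s) *\<^sub>R A) $ i $ j" and ?D = "\<lambda>s j. (mexp ((t - s) *\<^sub>R A) ** A) $ i $ j"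
  have xc: "continuous_on {0..t} (\<lambda>s. x s $ j)" for j
    by (intro continuous_on_component continuous_on_integral_solution[OF x])
  have Axc: "continuous_on {0..t} (\<lambda>s. (A *v x s) $ j)" for j
    unfolding matrix_vector_mult_def by simp (intro continuous_intros xc)
  have x_nth: "integral {0..r} (\<lambda>s. (A *v x s + w s) $ j) = x r $ j" if "r \<in> {0..t}" for r j
    using integral_component_eq_cart[OF has_integral_integrable[OF x[OF that]]]
      integral_unique[OF x[OF that]] by simp
  have "(\<lambda>s. (A *v x s) $ j + w s $ j) absolutely_integrable_on {0..t}" for j
    by (intro set_integral_add(1) absolutely_integrable_continuous_real Axc w)
  \<comment> \<open>By parts, the left-hand side equals \<open>x(t)\<close> plus the integral of \<open>e^{(t-s)A} A x(s)\<close>,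
    which cancels the contribution of \<open>A x\<close> to it.\<close>
  then have by_parts: "integral {0..t} (\<lambda>s. ?E s j * (A *v x s + w s) $ j)
      = mat 1 $ i $ j * x t $ j + integral {0..t} (\<lambda>r. ?D r j * x r $ j)" for j
    by (intro integral_mexp_nth_mult t x_nth) simp_all
  have split: "integral {0..t} (\<lambda>s. ?E s j * (A *v x s + w s) $ j)
      = integral {0..t} (\<lambda>s. ?E s j * (A *v x s) $ j) + integral {0..t} (\<lambda>s. ?E s j * w s $ j)" for j
  proof -
    have "(\<lambda>s. ?E s j * (A *v x s) $ j) integrable_on {0..t}"
      by (intro integrable_continuous_real continuous_intros Axc)
    moreover have "(\<lambda>s. ?E s j * w s $ j) integrable_on {0..t}"
      by (intro integrable_continuous_mult w continuous_intros)
    ultimately show ?thesis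
      by (simp add: distrib_left integral_add)
  qed
  have "(\<Sum>j\<in>UNIV. integral {0..t} (\<lambda>s. ?E s j * (A *v x s + w s) $ j))
      = (\<Sum>j\<in>UNIV. mat 1 $ i $ j * x t $ j) + (\<Sum>j\<in>UNIV. integral {0..t} (\<lambda>r. ?D r j * x r $ j))"
    by (simp only: by_parts sum.distrib)
  also have "(\<Sum>j\<in>UNIV. mat 1 $ i $ j * x t $ j) = (\<Sum>j\<in>UNIV. if i = j then x t $ j else 0)"
    by (intro sum.cong) (auto simp: mat_def)
  finally have "(\<Sum>j\<in>UNIV. integral {0..t} (\<lambda>s. ?E s j * (A *v x s + w s) $ j))
      = x t $ i + (\<Sum>j\<in>UNIV. integral {0..t} (\<lambda>r. ?D r j * x r $ j))"
    by simp
  moreover have "(\<Sum>j\<in>UNIV. integral {0..t} (\<lambda>s. ?E s j * (A *v x s + w s) $ j))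
      = (\<Sum>j\<in>UNIV. integral {0..t} (\<lambda>s. ?E s j * (A *v x s) $ j))
        + (\<Sum>j\<in>UNIV. integral {0..t} (\<lambda>s. ?E s j * w s $ j))"
    by (simp only: split sum.distrib)
  ultimately show ?thesis
    using sum_integral_mexp_nth_mult_matrix_vector[OF xc, of A i] by linarith
qed


lemma continuous_induction_le:
  fixes z :: "real \<Rightarrow> 'i::finite \<Rightarrow> real"
  assumes cont: "\<And>i T. continuous_on {0..T} (\<lambda>t. z t i)"
    and init: "\<And>i. z 0 i \<le> b i"
    and strict: "\<And>t i. 0 \<le> t \<Longrightarrow> \<forall>s\<in>{0..t}. \<forall>j. z s j \<le> b j \<Longrightarrow> z t i < b i"
    and t: "0 \<le> t"
  shows "z t i \<le> b i"
proof (rule ccontr)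
  assume "\<not> z t i \<le> b i"
  define S where "S = {s \<in> {0..t}. \<exists>j. b j \<le> z s j}"
  have "S = (\<Union>j. {s \<in> {0..t}. b j \<le> z s j})" unfolding S_def by auto
  also have "closed \<dots>"
    by (intro closed_UN ballI continuous_on_closed_Collect_le continuous_on_const cont closed_atLeastAtMost)
      simp
  finally have "closed S" .
  moreover have "t \<in> S" unfolding S_def using t \<open>\<not> z t i \<le> b i\<close> by (auto intro: less_imp_le simp: not_le)
  moreover have bdd: "bdd_below S" unfolding S_def by (rule bdd_belowI[of _ 0]) auto
  ultimately have t0: "Inf S \<in> S" using closed_contains_Inf by blast
  \<comment> \<open>\<open>Inf S\<close> is the first time some component reaches its bound.\<close>
  then have t0_nonneg: "0 \<le> Inf S" unfolding S_def by auto
  have below: "z s j < b j" if "s \<in> {0..<Inf S}" for s j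
  proof -
    have "s \<notin> S" using that cInf_lower[OF _ bdd, of s] by auto
    then show ?thesis using that t0 unfolding S_def by (auto simp: not_le)
  qed
  have "\<forall>s\<in>{0..Inf S}. \<forall>j. z s j \<le> b j"
  proof (cases "Inf S = 0")
    case True
    then show ?thesis using init by auto
  next
    case False
    define K where "K = (\<Inter>j. {s \<in> {0..Inf S}. z s j \<le> b j})"
    have "closed K"
      unfolding K_def by (intro closed_INT ballI continuous_on_closed_Collect_le continuous_on_const cont) auto
    moreover have "{0..<Inf S} \<subseteq> K" unfolding K_def using below less_imp_le by fastforce
    ultimately have "closure {0..<Inf S} \<subseteq> K" by (rule closure_minimal[rotated])
    then show ?thesis
      using False t0_nonneg closure_atLeastLessThan[of 0 "Inf S"] unfolding K_def by auto
  qed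
  then have "z (Inf S) j < b j" for j using strict t0_nonneg by blast
  moreover obtain j where "b j \<le> z (Inf S) j" using t0 unfolding S_def by blast
  ultimately show False by (meson not_le)
qed

section \<open>Solutions of the Lur'e system\<close>

lemma sum_sum_mexp_input_nth:
  "(\<Sum>k\<in>UNIV. \<Sum>j\<in>UNIV. C $ i $ k * mexp (\<tau> *\<^sub>R A) $ k $ j * (Bv *v v + Bu *v u) $ j)
    = (\<Sum>q\<in>UNIV. impulse C A Bv \<tau> $ i $ q * v $ q) + (\<Sum>q\<in>UNIV. impulse C A Bu \<tau> $ i $ q * u $ q)"
proof -
  have "C *v (mexp (\<tau> *\<^sub>R A) *v (Bv *v v + Bu *v u)) = impulse C A Bv \<tau> *v v + impulse C A Bu \<tau> *v u"
    by (simp add: impulse_def matrix_vector_right_distrib matrix_vector_mul_assoc matrix_mul_assoc)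
  then have "(C *v (mexp (\<tau> *\<^sub>R A) *v (Bv *v v + Bu *v u))) $ i
      = (impulse C A Bv \<tau> *v v + impulse C A Bu \<tau> *v u) $ i"
    by simp
  then show ?thesis
    by (simp add: matrix_vector_mult_def sum_distrib_left mult.assoc)
qed

lemma output_convolution:
  fixes A :: "real^'N^'N" and Bv :: "real^'l^'N" and Bu :: "real^'n^'N" and C :: "real^'N^'m"
  assumes t: "0 \<le> t"
    and x: "\<And>r. r \<in> {0..t} \<Longrightarrow> ((\<lambda>s. A *v x s + Bv *v v s + Bu *v u s) has_integral x r) {0..r}"
    and v: "\<And>q. (\<lambda>s. v s $ q) absolutely_integrable_on {0..t}"
    and u: "\<And>q. (\<lambda>s. u s $ q) absolutely_integrable_on {0..t}"
  shows "(C *v x t) $ i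
       = (\<Sum>q\<in>UNIV. integral {0..t} (\<lambda>s. impulse C A Bv (t - s) $ i $ q * v s $ q))
         + (\<Sum>q\<in>UNIV. integral {0..t} (\<lambda>s. impulse C A Bu (t - s) $ i $ q * u s $ q))"
proof -
  define w where "w s = Bv *v v s + Bu *v u s" for s
  let ?E = "\<lambda>s. mexp ((t - s) *\<^sub>R A)"
  have w_nth: "(\<lambda>s. w s $ j) absolutely_integrable_on {0..t}" for j
    unfolding w_def vector_add_component
    by (intro set_integral_add(1) absolutely_integrable_matrix_vector_nth v u)
  have "(\<lambda>s. A *v x s + w s) = (\<lambda>s. A *v x s + Bv *v v s + Bu *v u s)"
    by (simp add: w_def add.assoc)
  then have x_nth: "x t $ k = (\<Sum>j\<in>UNIV. integral {0..t} (\<lambda>s. ?E s $ k $ j * w s $ j))" for k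
    by (intro variation_of_constants[OF t _ w_nth]) (simp add: x)
  have "continuous_on {0..t} (\<lambda>s. ?E s $ k $ j)" for k j
    by (intro continuous_on_mexp_nth continuous_intros)
  then have integrable: "(\<lambda>s. C $ i $ k * ?E s $ k $ j * w s $ j) integrable_on {0..t}" for k j
    by (intro integrable_continuous_mult[OF _ w_nth] continuous_on_mult[OF continuous_on_const])
  have Hc: "continuous_on {0..t} (\<lambda>s. impulse C A B (t - s) $ i $ q)" for B :: "real^'k^'N" and q
    by (intro continuous_on_impulse_nth continuous_intros)
  have Iv: "(\<lambda>s. impulse C A Bv (t - s) $ i $ q * v s $ q) integrable_on {0..t}" for q
    by (rule integrable_continuous_mult[OF Hc v])
  have Iu: "(\<lambda>s. impulse C A Bu (t - s) $ i $ q * u s $ q) integrable_on {0..t}" for q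
    by (rule integrable_continuous_mult[OF Hc u])
  have pointwise: "(\<Sum>k\<in>UNIV. \<Sum>j\<in>UNIV. C $ i $ k * ?E s $ k $ j * w s $ j)
      = (\<Sum>q\<in>UNIV. impulse C A Bv (t - s) $ i $ q * v s $ q)
        + (\<Sum>q\<in>UNIV. impulse C A Bu (t - s) $ i $ q * u s $ q)" for s
    unfolding w_def by (rule sum_sum_mexp_input_nth)
  have "(C *v x t) $ i = (\<Sum>k\<in>UNIV. \<Sum>j\<in>UNIV. integral {0..t} (\<lambda>s. C $ i $ k * ?E s $ k $ j * w s $ j))"
    by (simp add: matrix_vector_mult_def x_nth sum_distrib_left mult.assoc)
  also have "\<dots> = (\<Sum>k\<in>UNIV. integral {0..t} (\<lambda>s. \<Sum>j\<in>UNIV. C $ i $ k * ?E s $ k $ j * w s $ j))"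
    by (intro sum.cong refl integral_sum[symmetric]) (auto intro: integrable)
  also have "\<dots> = integral {0..t} (\<lambda>s. \<Sum>k\<in>UNIV. \<Sum>j\<in>UNIV. C $ i $ k * ?E s $ k $ j * w s $ j)"
    by (intro integral_sum[symmetric] integrable_sum) (auto intro: integrable)
  also have "\<dots> = integral {0..t} (\<lambda>s. (\<Sum>q\<in>UNIV. impulse C A Bv (t - s) $ i $ q * v s $ q)
                                      + (\<Sum>q\<in>UNIV. impulse C A Bu (t - s) $ i $ q * u s $ q))"
    by (simp only: pointwise)
  also have "\<dots> = integral {0..t} (\<lambda>s. \<Sum>q\<in>UNIV. impulse C A Bv (t - s) $ i $ q * v s $ q)
                 + integral {0..t} (\<lambda>s. \<Sum>q\<in>UNIV. impulse C A Bu (t - s) $ i $ q * u s $ q)"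
    by (intro integral_add integrable_sum) (auto intro: Iv Iu)
  also have "\<dots> = (\<Sum>q\<in>UNIV. integral {0..t} (\<lambda>s. impulse C A Bv (t - s) $ i $ q * v s $ q))
                 + (\<Sum>q\<in>UNIV. integral {0..t} (\<lambda>s. impulse C A Bu (t - s) $ i $ q * u s $ q))"
    by (simp add: integral_sum Iv Iu)
  finally show ?thesis .
qed

lemma abs_convolution_sum_le:
  assumes t: "0 \<le> t" and h: "abs_int_impulse C A B"
    and d: "\<And>q. (\<lambda>s. d s $ q) absolutely_integrable_on {0..t}"
      "\<And>s q. s \<in> {0..t} \<Longrightarrow> \<bar>d s $ q\<bar> \<le> b $ q"
  shows "\<bar>\<Sum>q\<in>UNIV. integral {0..t} (\<lambda>s. impulse C A B (t - s) $ i $ q * d s $ q)\<bar>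
         \<le> (gain C A B *v b) $ i"
proof -
  have "\<bar>integral {0..t} (\<lambda>s. impulse C A B (t - s) $ i $ q * d s $ q)\<bar>
      \<le> b $ q * integral {0..} (\<lambda>\<tau>. \<bar>impulse C A B \<tau> $ i $ q\<bar>)" for q
  proof (rule abs_integral_convolution_le[OF t _ _ d(1) d(2)])
    show "continuous_on UNIV (\<lambda>\<tau>. impulse C A B \<tau> $ i $ q)"
      by (intro continuous_intros)
    show "(\<lambda>\<tau>. impulse C A B \<tau> $ i $ q) absolutely_integrable_on {0..}"
      using h unfolding abs_int_impulse_def by blast
  qed
  then have "\<bar>\<Sum>q\<in>UNIV. integral {0..t} (\<lambda>s. impulse C A B (t - s) $ i $ q * d s $ q)\<bar>
      \<le> (\<Sum>q\<in>UNIV. gain C A B $ i $ q * b $ q)"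
    by (intro order_trans[OF sum_abs] sum_mono) (simp add: gain_def mult.commute)
  then show ?thesis by (simp add: matrix_vector_mult_def)
qed

lemma absolutely_integrable_on_Icc_if_bounded_measurable:
  fixes u :: "real \<Rightarrow> real^'n"
  assumes u: "u \<in> borel_measurable (restrict_space lborel {0..})"
    and bound: "\<And>s. s \<in> {0..t} \<Longrightarrow> \<bar>u s $ q\<bar> \<le> c"
  shows "(\<lambda>s. u s $ q) absolutely_integrable_on {0..t}"
proof -
  have "(\<lambda>s. indicator {0..} s *\<^sub>R u s) \<in> borel_measurable lebesgue"
    using u by (subst (asm) borel_measurable_restrict_space_iff) (auto intro: measurable_completion)
  then have "(\<lambda>s. (indicator {0..} s *\<^sub>R u s) $ q) \<in> borel_measurable (lebesgue_on {0..t})"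
    by (intro measurable_restrict_space1 measurable_compose[OF _ borel_measurable_nth])
  then have "(\<lambda>s. u s $ q) \<in> borel_measurable (lebesgue_on {0..t})"
    by (rule measurable_cong[THEN iffD1, rotated]) (auto simp: indicator_def)
  then show ?thesis
    using bound by (intro measurable_bounded_by_integrable_imp_absolutely_integrable[where g = "\<lambda>_. c"]) auto
qed

lemma lure_solution_continuous:
  "lure_solution A Bu Bv Cz phi u x \<Longrightarrow> continuous_on {0..T} x"
  unfolding lure_solution_def by (rule continuous_on_integral_solution) auto

lemma lure_output_nth_continuous:
  "lure_solution A Bu Bv Cz phi u x \<Longrightarrow> continuous_on {0..T} (\<lambda>s. (C *v x s) $ q)"
  by (intro continuous_on_component linear_continuous_on_compose[OF lure_solution_continuous]
      matrix_vector_mul_linear)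

lemma lure_output_le:
  fixes C :: "real^'N^'m"
  assumes u: "u \<in> borel_measurable (restrict_space lborel {0..})" "\<forall>t\<ge>0. \<forall>i. \<bar>u t $ i\<bar> \<le> ubar $ i"
    and x: "lure_solution A Bu Bv Cz phi u x"
    and h: "abs_int_impulse C A Bv" "abs_int_impulse C A Bu"
    and t: "0 \<le> t" and zbar: "\<forall>q. 0 < zbar $ q"
    and z: "\<forall>s\<in>{0..t}. \<forall>q. \<bar>(Cz *v x s) $ q\<bar> \<le> zbar $ q"
  shows "\<bar>(C *v x t) $ i\<bar> \<le> (gain C A Bv *v (gamma_psi phi zbar *v zbar) + gain C A Bu *v ubar) $ i"
proof -
  have "continuous_on {0..t} (\<lambda>s. sin (phi $ q + (Cz *v x s) $ q) - sin (phi $ q) - cos (phi $ q) * (Cz *v x s) $ q)" for q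
    by (intro continuous_on_diff continuous_on_sin continuous_on_add continuous_on_mult continuous_on_const
        lure_output_nth_continuous[OF x])
  then have v: "(\<lambda>s. psi phi (Cz *v x s) $ q) absolutely_integrable_on {0..t}" for q
    unfolding psi_def by (simp add: absolutely_integrable_continuous_real)
  have u_nth: "(\<lambda>s. u s $ q) absolutely_integrable_on {0..t}" for q
    using u by (intro absolutely_integrable_on_Icc_if_bounded_measurable) auto
  have "(C *v x t) $ i
      = (\<Sum>q\<in>UNIV. integral {0..t} (\<lambda>s. impulse C A Bv (t - s) $ i $ q * psi phi (Cz *v x s) $ q))
        + (\<Sum>q\<in>UNIV. integral {0..t} (\<lambda>s. impulse C A Bu (t - s) $ i $ q * u s $ q))"
    by (rule output_convolution[OF t _ v u_nth]) (use x t in \<open>auto simp: lure_solution_def\<close>)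
  then have "\<bar>(C *v x t) $ i\<bar>
      \<le> \<bar>\<Sum>q\<in>UNIV. integral {0..t} (\<lambda>s. impulse C A Bv (t - s) $ i $ q * psi phi (Cz *v x s) $ q)\<bar>
        + \<bar>\<Sum>q\<in>UNIV. integral {0..t} (\<lambda>s. impulse C A Bu (t - s) $ i $ q * u s $ q)\<bar>"
    by (simp only: abs_triangle_ineq)
  also have "\<dots> \<le> (gain C A Bv *v (gamma_psi phi zbar *v zbar)) $ i + (gain C A Bu *v ubar) $ i"
    using z zbar u(2) t
    by (intro add_mono abs_convolution_sum_le h v u_nth abs_psi_nth_le_gamma_psi_bound) auto
  finally show ?thesis by simp
qed

lemma small_gain_nth_less:
  assumes "vless (G1 *v ub) ((mat 1 - G2 ** \<Gamma>) *v zb)"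
  shows "(G2 *v (\<Gamma> *v zb) + G1 *v ub) $ i < zb $ i"
proof -
  have "(G1 *v ub) $ i < zb $ i - (G2 *v (\<Gamma> *v zb)) $ i"
    using assms[unfolded vless_def, rule_format, of i]
    by (simp add: matrix_vector_mult_diff_rdistrib matrix_vector_mul_assoc)
  then show ?thesis by simp
qed

lemma lure_bound_persists:
  assumes u: "u \<in> borel_measurable (restrict_space lborel {0..})" "\<forall>t\<ge>0. \<forall>i. \<bar>u t $ i\<bar> \<le> ubar $ i"
    and x: "lure_solution A Bu Bv Cz phi u x" and x0: "x 0 = 0"
    and h: "abs_int_impulse Cz A Bv" "abs_int_impulse Cz A Bu"
    and zbar: "\<forall>i. 0 < zbar $ i"
    and small_gain: "vless (gain Cz A Bu *v ubar) ((mat 1 - gain Cz A Bv ** gamma_psi phi zbar) *v zbar)"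
    and t: "0 \<le> t"
  shows "\<bar>(Cz *v x t) $ i\<bar> \<le> zbar $ i"
proof (rule continuous_induction_le[where z = "\<lambda>t i. \<bar>(Cz *v x t) $ i\<bar>" and b = "\<lambda>i. zbar $ i"])
  show "continuous_on {0..T} (\<lambda>t. \<bar>(Cz *v x t) $ i\<bar>)" for T i
    by (intro continuous_on_rabs lure_output_nth_continuous[OF x])
  show "\<bar>(Cz *v x 0) $ i\<bar> \<le> zbar $ i" for i
    using x0 zbar by (simp add: less_imp_le)
  show "\<bar>(Cz *v x s) $ i\<bar> < zbar $ i"
    if "0 \<le> s" "\<forall>r\<in>{0..s}. \<forall>j. \<bar>(Cz *v x r) $ j\<bar> \<le> zbar $ j" for s i
    using lure_output_le[OF u x h that(1) zbar that(2), of i] small_gain_nth_less[OF small_gain, of i]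
    by linarith
qed (rule t)

theorem theorem2:
  fixes A :: "real^'N^'N" and Bu :: "real^'n^'N" and Bv :: "real^'l^'N"
    and Cy :: "real^'N^'m" and Cz :: "real^'N^'l" and phi :: "real^'l"
    and ubar :: "real^'n" and zbar :: "real^'l"
  assumes int_yu: "abs_int_impulse Cy A Bu" and int_yv: "abs_int_impulse Cy A Bv"
    and int_zu: "abs_int_impulse Cz A Bu" and int_zv: "abs_int_impulse Cz A Bv"
    and ubar_nonneg: "\<forall>i. 0 \<le> ubar $ i"
    and zbar_pos: "\<forall>i. 0 < zbar $ i"
    and small_gain: "vless (gain Cz A Bu *v ubar) ((mat 1 - gain Cz A Bv ** gamma_psi phi zbar) *v zbar)"
  shows "\<forall>u x. u \<in> borel_measurable (restrict_space lborel {0..})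
           \<and> (\<forall>t\<ge>0. \<forall>i. \<bar>u t $ i\<bar> \<le> ubar $ i)
           \<and> x 0 = 0 \<and> lure_solution A Bu Bv Cz phi u x
         \<longrightarrow> (\<forall>t\<ge>0. \<forall>i. \<bar>(Cz *v x t) $ i\<bar> \<le> zbar $ i)
           \<and> (\<exists>ybar :: real^'m. \<forall>t\<ge>0. \<forall>i. \<bar>(Cy *v x t) $ i\<bar> \<le> ybar $ i)"
proof (intro allI impI, elim conjE)
  fix u :: "real \<Rightarrow> real^'n" and x :: "real \<Rightarrow> real^'N"
  assume u: "u \<in> borel_measurable (restrict_space lborel {0..})" "\<forall>t\<ge>0. \<forall>i. \<bar>u t $ i\<bar> \<le> ubar $ i"
    and x0: "x 0 = 0" and x: "lure_solution A Bu Bv Cz phi u x"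
  have z_bound: "\<forall>t\<ge>0. \<forall>i. \<bar>(Cz *v x t) $ i\<bar> \<le> zbar $ i"
    using lure_bound_persists[OF u x x0 int_zv int_zu zbar_pos small_gain] by blast
  moreover have "\<forall>t\<ge>0. \<forall>i. \<bar>(Cy *v x t) $ i\<bar>
      \<le> (gain Cy A Bv *v (gamma_psi phi zbar *v zbar) + gain Cy A Bu *v ubar) $ i"
    using lure_output_le[OF u x int_yv int_yu _ zbar_pos] z_bound by auto
  ultimately show "(\<forall>t\<ge>0. \<forall>i. \<bar>(Cz *v x t) $ i\<bar> \<le> zbar $ i)
      \<and> (\<exists>ybar :: real^'m. \<forall>t\<ge>0. \<forall>i. \<bar>(Cy *v x t) $ i\<bar> \<le> ybar $ i)"
    by blast
qed

end
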